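(* For every $k\in\mathbb{N}$, every $v\in V^X$ and every $i\in\Pi$, $\sup\{\mathrm{Cost}_i(\rho)\mid\rho\in\Lambda^k(v)\}=\max\{\mathrm{Cost}_i(\rho)\mid\rho\in\Lambda^k(v)\}$, where the maximum is taken in $\mathbb{N}\cup\{+\infty\}$ (i.e., the supremum is attained).
   Context: Let $\mathcal{G}$ be a quantitative reachability game on an arena $G=(\Pi,V,(V_i)_{i\in\Pi},E)$ (finite player set $\Pi$, finite vertex set $V$ with $|V|\ge2$, $|\Pi|\le|V|$, partition $(V_i)$, every vertex has a successor) with targets $F_i\subseteq V$ and costs $\mathrm{Cost}_i(\rho)=$ least $k$ with $\rho_k\in F_i$ (or $+\infty$); $v_0\in V$. Extended game: arena $X$ with vertices $V^X=V\times2^\Pi$, edges $((v,I),(v',I'))\in E^X$ iff $(v,v')\in E$ and $I'=I\cup\{i:v'\in F_i\}$, $(v,I)\in V^X_i$ iff $v\in V_i$, targets $F^X_i=\{(v,I):i\in I\}$ with corresponding reachability costs $\mathrm{Cost}_i$; $x_0=(v_0,\{i:v_0\in F_i\})$; $I(u)$ is the second component. $\mathcal{I}$ is the set of $I$ with some $(v,I)$ reachable from $x_0$, $N=|\mathcal{I}|$, $J_1<\dots<J_N$ a fixed total order of $\mathcal{I}$ extending $I<I'$ iff $I\ne I'$ and some $(v',I')$ is reachable from some $(v,I)$. $V^{\ge J_n}=\{(v,J_m):v\in V,m\ge n\}$. Labelings: for $\lambda:V^X\to\mathbb{N}\cup\{+\infty\}$, a play $\rho$ of $X$ is $\lambda$-consistent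 if $\mathrm{Cost}_i(\rho_{\ge n})\le\lambda(\rho_n)$ whenever $\rho_n\in V^X_i$. $\lambda^0(u)=0$ if $u\in V^X_i$ and $i\in I(u)$, else $+\infty$. The update of $\lambda^k$ w.r.t. $V^{\ge J_n}$ keeps values outside $V^{\ge J_n}$ and for $u\in V^{\ge J_n}\cap V^X_i$ sets $\lambda^{k+1}(u)=0$ if $i\in I(u)$, otherwise $1+\min_{(u,u')\in E^X}\sup\{\mathrm{Cost}_i(\rho):\rho\in\Lambda^k(u')\}$ ($1+(+\infty)=+\infty$). The sequence is generated by $n_0=N$, $\lambda^{k+1}=$ update of $\lambda^k$ w.r.t. $V^{\ge J_{n_k}}$, $n_{k+1}=n_k-1$ if $\lambda^{k+1}=\lambda^k$ and $n_k>1$, else $n_{k+1}=n_k$. $\Lambda^k(v)$ is the set of $\lambda^k$-consistent plays from $v$. *)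

theory Defs
  imports Main "HOL-Library.Extended_Nat"
begin

definition arena :: "'p set \<Rightarrow> 'v set \<Rightarrow> ('p \<Rightarrow> 'v set) \<Rightarrow> ('v \<times> 'v) set \<Rightarrow> bool" where
  "arena Pi V Vp E \<longleftrightarrow>
     finite Pi \<and> finite V \<and> card V \<ge> 2 \<and> card Pi \<le> card V \<and>
     (\<forall>i\<in>Pi. Vp i \<subseteq> V) \<and> (\<Union>i\<in>Pi. Vp i) = V \<and>
     (\<forall>i\<in>Pi. \<forall>j\<in>Pi. i \<noteq> j \<longrightarrow> Vp i \<inter> Vp j = {}) \<and>
     E \<subseteq> V \<times> V \<and> (\<forall>v\<in>V. \<exists>v'. (v, v') \<in> E)"

definition cost :: "'a set \<Rightarrow> (nat \<Rightarrow> 'a) \<Rightarrow> enat" where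
  "cost T \<rho> = (if \<exists>k. \<rho> k \<in> T then enat (LEAST k. \<rho> k \<in> T) else \<infinity>)"

definition VX :: "'v set \<Rightarrow> 'p set \<Rightarrow> ('v \<times> 'p set) set" where
  "VX V Pi = V \<times> Pow Pi"

definition EdgX :: "'p set \<Rightarrow> ('v \<times> 'v) set \<Rightarrow> ('p \<Rightarrow> 'v set) \<Rightarrow> (('v \<times> 'p set) \<times> ('v \<times> 'p set)) set" where
  "EdgX Pi E F = {((v, I), (v', I')). (v, v') \<in> E \<and> I \<subseteq> Pi \<and> I' = I \<union> {i \<in> Pi. v' \<in> F i}}"

definition VXi :: "'v set \<Rightarrow> 'p set \<Rightarrow> ('p \<Rightarrow> 'v set) \<Rightarrow> 'p \<Rightarrow> ('v \<times> 'p set) set" where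
  "VXi V Pi Vp i = {(v, I) \<in> VX V Pi. v \<in> Vp i}"

definition FX :: "'p \<Rightarrow> ('v \<times> 'p set) set" where
  "FX i = {(v, I). i \<in> I}"

definition x0 :: "'p set \<Rightarrow> ('p \<Rightarrow> 'v set) \<Rightarrow> 'v \<Rightarrow> 'v \<times> 'p set" where
  "x0 Pi F v0 = (v0, {i \<in> Pi. v0 \<in> F i})"

definition playX :: "'p set \<Rightarrow> ('v \<times> 'v) set \<Rightarrow> ('p \<Rightarrow> 'v set) \<Rightarrow> (nat \<Rightarrow> 'v \<times> 'p set) \<Rightarrow> bool" where
  "playX Pi E F \<rho> \<longleftrightarrow> (\<forall>n. (\<rho> n, \<rho> (Suc n)) \<in> EdgX Pi E F)"

definition reachI :: "'p set \<Rightarrow> ('v \<times> 'v) set \<Rightarrow> ('p \<Rightarrow> 'v set) \<Rightarrow> 'v \<Rightarrow> 'p set set" where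
  "reachI Pi E F v0 = {I. \<exists>v. (x0 Pi F v0, (v, I)) \<in> (EdgX Pi E F)\<^sup>*}"

definition valid_order :: "'p set \<Rightarrow> ('v \<times> 'v) set \<Rightarrow> ('p \<Rightarrow> 'v set) \<Rightarrow> 'v \<Rightarrow> (nat \<Rightarrow> 'p set) \<Rightarrow> bool" where
  "valid_order Pi E F v0 J \<longleftrightarrow>
     bij_betw J {1..card (reachI Pi E F v0)} (reachI Pi E F v0) \<and>
     (\<forall>m\<in>{1..card (reachI Pi E F v0)}. \<forall>n\<in>{1..card (reachI Pi E F v0)}.
        J m \<noteq> J n \<and> (\<exists>v v'. ((v, J m), (v', J n)) \<in> (EdgX Pi E F)\<^sup>*) \<longrightarrow> m < n)"

definition Vge :: "'v set \<Rightarrow> 'p set \<Rightarrow> ('v \<times> 'v) set \<Rightarrow> ('p \<Rightarrow> 'v set) \<Rightarrow> 'v \<Rightarrow> (nat \<Rightarrow> 'p set) \<Rightarrow> nat \<Rightarrow> ('v \<times> 'p set) set" where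
  "Vge V Pi E F v0 J n = {(v, J m) | v m. v \<in> V \<and> n \<le> m \<and> m \<le> card (reachI Pi E F v0)}"

type_synonym ('v, 'p) labeling = "'v \<times> 'p set \<Rightarrow> enat"

definition lam0 :: "'v set \<Rightarrow> 'p set \<Rightarrow> ('p \<Rightarrow> 'v set) \<Rightarrow> ('v, 'p) labeling" where
  "lam0 V Pi Vp u = (if \<exists>i\<in>Pi. u \<in> VXi V Pi Vp i \<and> i \<in> snd u then 0 else \<infinity>)"

definition Lambda :: "'v set \<Rightarrow> 'p set \<Rightarrow> ('p \<Rightarrow> 'v set) \<Rightarrow> ('v \<times> 'v) set \<Rightarrow> ('p \<Rightarrow> 'v set)
    \<Rightarrow> ('v, 'p) labeling \<Rightarrow> 'v \<times> 'p set \<Rightarrow> (nat \<Rightarrow> 'v \<times> 'p set) set" where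
  "Lambda V Pi Vp E F lam u =
     {\<rho>. playX Pi E F \<rho> \<and> \<rho> 0 = u \<and>
          (\<forall>n. \<forall>i\<in>Pi. \<rho> n \<in> VXi V Pi Vp i \<longrightarrow> cost (FX i) (\<lambda>m. \<rho> (n + m)) \<le> lam (\<rho> n))}"

definition update :: "'v set \<Rightarrow> 'p set \<Rightarrow> ('p \<Rightarrow> 'v set) \<Rightarrow> ('v \<times> 'v) set \<Rightarrow> ('p \<Rightarrow> 'v set) \<Rightarrow> 'v
    \<Rightarrow> (nat \<Rightarrow> 'p set) \<Rightarrow> ('v, 'p) labeling \<Rightarrow> nat \<Rightarrow> ('v, 'p) labeling" where
  "update V Pi Vp E F v0 J lam n u =
     (if u \<in> Vge V Pi E F v0 J n then
        (let i = (THE i. i \<in> Pi \<and> u \<in> VXi V Pi Vp i) in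
          if i \<in> snd u then 0
          else 1 + (INF u'\<in>{u'. (u, u') \<in> EdgX Pi E F}.
                      Sup (cost (FX i) ` Lambda V Pi Vp E F lam u')))
      else lam u)"

fun labseq :: "'v set \<Rightarrow> 'p set \<Rightarrow> ('p \<Rightarrow> 'v set) \<Rightarrow> ('v \<times> 'v) set \<Rightarrow> ('p \<Rightarrow> 'v set) \<Rightarrow> 'v
    \<Rightarrow> (nat \<Rightarrow> 'p set) \<Rightarrow> nat \<Rightarrow> ('v, 'p) labeling \<times> nat" where
  "labseq V Pi Vp E F v0 J 0 = (lam0 V Pi Vp, card (reachI Pi E F v0))"
| "labseq V Pi Vp E F v0 J (Suc k) =
     (let (lam, n) = labseq V Pi Vp E F v0 J k;
          lam' = update V Pi Vp E F v0 J lam n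
      in (lam', if lam' = lam \<and> n > 1 then n - 1 else n))"

definition lam :: "'v set \<Rightarrow> 'p set \<Rightarrow> ('p \<Rightarrow> 'v set) \<Rightarrow> ('v \<times> 'v) set \<Rightarrow> ('p \<Rightarrow> 'v set) \<Rightarrow> 'v
    \<Rightarrow> (nat \<Rightarrow> 'p set) \<Rightarrow> nat \<Rightarrow> ('v, 'p) labeling" where
  "lam V Pi Vp E F v0 J k = fst (labseq V Pi Vp E F v0 J k)"

end

theory Submission
  imports Defs
begin

(*
  Consistency with a labelling only constrains finite prefixes, so each set
  Lambda(lam)(u) is closed under limits of plays, and all plays stay in the finite set V^X.
  If the costs of its plays are bounded, the supremum is the maximum of a finite set; otherwise
  Koenig's lemma yields a limit of plays reaching the target ever later, which lies in the set and
  never reaches the target, so its cost is the supremum infinity.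

  It remains to see that Lambda(lam^k)(u) is never empty. Take limits, as h grows, of the outcomes
  of h rounds of backward induction, where every player moves to a successor minimising her own
  cost. These limit plays are closed under suffixes and admit no profitable one-shot deviation:
  if the owner i of the first vertex deviates to y, some limit play from y costs her at least the
  original cost minus one. By induction on k such plays are lam^k-consistent; this works for every
  labelling step.
*)

lemma cost_le_enat_iff: "cost T \<rho> \<le> enat b \<longleftrightarrow> (\<exists>k\<le>b. \<rho> k \<in> T)"
proof
  assume "cost T \<rho> \<le> enat b"
  then show "\<exists>k\<le>b. \<rho> k \<in> T"
    unfolding cost_def by (auto split: if_splits intro: LeastI)
next
  assume "\<exists>k\<le>b. \<rho> k \<in> T"
  then show "cost T \<rho> \<le> enat b"
    unfolding cost_def by (auto intro: Least_le order.trans)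
qed

lemma cost_eq_0: "\<rho> 0 \<in> T \<Longrightarrow> cost T \<rho> = 0"
  unfolding cost_def by (auto simp: zero_enat_def)

lemma cost_Suc: "\<rho> 0 \<notin> T \<Longrightarrow> cost T \<rho> = eSuc (cost T (\<lambda>n. \<rho> (Suc n)))"
  unfolding cost_def by (auto simp: eSuc_enat Least_Suc) (metis not0_implies_Suc)

lemma cost_le_enat_if_prefix_eq:
  "cost T \<sigma> \<le> enat b \<Longrightarrow> \<forall>j\<le>b. \<rho> j = \<sigma> j \<Longrightarrow> cost T \<rho> \<le> enat b"
  unfolding cost_le_enat_iff by auto

lemma konig_limit:
  fixes S :: "nat \<Rightarrow> (nat \<Rightarrow> 'a) set"
  assumes "finite A" and nonempty: "\<And>m. S m \<noteq> {}" and decreasing: "\<And>m. S (Suc m) \<subseteq> S m"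
    and values_in_A: "\<And>m \<rho> n. \<rho> \<in> S m \<Longrightarrow> \<rho> n \<in> A"
  shows "\<exists>r. \<forall>m. \<exists>\<rho>\<in>S m. \<forall>j<m. \<rho> j = r j"
proof -
  define good where "good p \<longleftrightarrow> (\<forall>m. \<exists>\<rho>\<in>S m. \<forall>j<length p. \<rho> j = p ! j)" for p :: "'a list"
  have good_extends: "\<exists>a. good (p @ [a])" if "good p" for p
  proof (rule ccontr)
    assume "\<nexists>a. good (p @ [a])"
    then obtain bad where bad: "\<And>a. \<not> (\<exists>\<rho>\<in>S (bad a). \<forall>j<Suc (length p). \<rho> j = (p @ [a]) ! j)"
      unfolding good_def by (metis length_append_singleton)
    obtain \<rho> where \<rho>: "\<rho> \<in> S (\<Sum>a\<in>A. bad a)" "\<forall>j<length p. \<rho> j = p ! j"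
      using \<open>good p\<close> unfolding good_def by blast
    define a where "a = \<rho> (length p)"
    have "a \<in> A" unfolding a_def using values_in_A \<rho>(1) .
    then have "bad a \<le> (\<Sum>a\<in>A. bad a)" using \<open>finite A\<close> by (intro member_le_sum) auto
    then have "\<rho> \<in> S (bad a)"
      using \<rho>(1) decreasing by (induction rule: dec_induct) auto
    moreover have "\<forall>j<Suc (length p). \<rho> j = (p @ [a]) ! j"
      using \<rho>(2) by (auto simp: a_def nth_append less_Suc_eq)
    ultimately show False using bad by blast
  qed
  define ext where "ext p = (SOME a. good (p @ [a]))" for p
  define prefix where "prefix = rec_nat [] (\<lambda>_ p. p @ [ext p])"
  define r where "r n = ext (prefix n)" for n
  have prefix_eq: "prefix n = map r [0..<n]" for n
    by (induction n) (simp_all add: prefix_def r_def)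
  have "good (prefix n)" for n
  proof (induction n)
    case 0
    show ?case using nonempty unfolding good_def prefix_def by auto
  next
    case (Suc n)
    then show ?case unfolding ext_def prefix_def by (auto intro: someI_ex good_extends)
  qed
  then show ?thesis unfolding good_def prefix_eq by auto
qed

lemma cost_SUP_attained:
  fixes P :: "(nat \<Rightarrow> 'a) set"
  assumes "finite A" and "P \<noteq> {}" and values_in_A: "\<And>\<rho> n. \<rho> \<in> P \<Longrightarrow> \<rho> n \<in> A"
    and closed: "\<And>r. \<forall>m. \<exists>\<rho>\<in>P. \<forall>j<m. \<rho> j = r j \<Longrightarrow> r \<in> P"
  shows "\<exists>\<rho>\<in>P. cost T \<rho> = (SUP \<rho>'\<in>P. cost T \<rho>')"
proof (cases "\<exists>b. \<forall>\<rho>\<in>P. cost T \<rho> \<le> enat b")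
  case True
  then have "finite (cost T ` P)" by (auto intro: finite_enat_bounded)
  then have "(SUP \<rho>'\<in>P. cost T \<rho>') \<in> cost T ` P"
    using \<open>P \<noteq> {}\<close> by (simp add: cSup_eq_Max)
  then show ?thesis by (metis imageE)
next
  case False
  define S where "S m = {\<rho> \<in> P. enat m \<le> cost T \<rho>}" for m
  have "\<exists>r. \<forall>m. \<exists>\<rho>\<in>S m. \<forall>j<m. \<rho> j = r j"
  proof (rule konig_limit[OF \<open>finite A\<close>])
    show "S m \<noteq> {}" for m
    proof -
      obtain \<rho> where "\<rho> \<in> P" and "\<not> cost T \<rho> \<le> enat m" using False by blast
      then show ?thesis unfolding S_def by auto
    qed
    show "S (Suc m) \<subseteq> S m" for m
      unfolding S_def by (auto intro: order.trans[rotated])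
  qed (auto simp: S_def values_in_A)
  then obtain r where r: "\<forall>m. \<exists>\<rho>\<in>S m. \<forall>j<m. \<rho> j = r j" by blast
  then have "r \<in> P" unfolding S_def by (blast intro: closed)
  have "r k \<notin> T" for k
  proof
    assume "r k \<in> T"
    obtain \<rho> where "\<rho> \<in> S (Suc k)" and "\<forall>j<Suc k. \<rho> j = r j" using r by blast
    then have "enat (Suc k) \<le> cost T \<rho>" and "cost T \<rho> \<le> enat k"
      using \<open>r k \<in> T\<close> unfolding S_def cost_le_enat_iff by auto
    then have "enat (Suc k) \<le> enat k" by (rule order.trans)
    then show False by simp
  qed
  then have "cost T r = \<infinity>" unfolding cost_def by simp
  then show ?thesis using \<open>r \<in> P\<close> by (metis SUP_upper top.extremum_uniqueI top_enat_def)
qed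

lemma Lambda_closed:
  assumes approx: "\<forall>m. \<exists>\<rho>\<in>Lambda V Pi Vp E F L u. \<forall>j<m. \<rho> j = r j"
  shows "r \<in> Lambda V Pi Vp E F L u"
proof -
  have "r 0 = u"
    using approx[rule_format, of 1] unfolding Lambda_def by auto
  moreover have "playX Pi E F r"
    unfolding playX_def
  proof
    fix n
    obtain \<rho> where "\<rho> \<in> Lambda V Pi Vp E F L u" and "\<forall>j<Suc (Suc n). \<rho> j = r j"
      using approx by blast
    then show "(r n, r (Suc n)) \<in> EdgX Pi E F"
      unfolding Lambda_def playX_def by (metis (no_types, lifting) lessI less_SucI mem_Collect_eq)
  qed
  moreover have "cost (FX i) (\<lambda>m. r (n + m)) \<le> L (r n)" if "i \<in> Pi" "r n \<in> VXi V Pi Vp i" for n i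
  proof (cases "L (r n)")
    case (enat b)
    obtain \<rho> where \<rho>: "\<rho> \<in> Lambda V Pi Vp E F L u" and agree: "\<forall>j<Suc (n + b). \<rho> j = r j"
      using approx by blast
    then have "\<forall>i\<in>Pi. \<rho> n \<in> VXi V Pi Vp i \<longrightarrow> cost (FX i) (\<lambda>m. \<rho> (n + m)) \<le> L (\<rho> n)"
      unfolding Lambda_def by blast
    moreover have "\<rho> n = r n" using agree by simp
    ultimately have "cost (FX i) (\<lambda>m. \<rho> (n + m)) \<le> enat b"
      using that enat by simp
    then show ?thesis
      using agree enat by (auto intro: cost_le_enat_if_prefix_eq)
  qed simp
  ultimately show ?thesis unfolding Lambda_def by blast
qed

locale arena_game =
  fixes Pi :: "'p set" and V :: "'v set" and Vp :: "'p \<Rightarrow> 'v set"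
    and E :: "('v \<times> 'v) set" and F :: "'p \<Rightarrow> 'v set"
  assumes arena: "arena Pi V Vp E"
begin

lemma finite_VX: "finite (VX V Pi)"
  using arena unfolding arena_def VX_def by simp

lemma edge_target_in_VX: "(x, y) \<in> EdgX Pi E F \<Longrightarrow> y \<in> VX V Pi"
  using arena unfolding arena_def EdgX_def VX_def by auto

lemma ex_edge: "x \<in> VX V Pi \<Longrightarrow> \<exists>y. (x, y) \<in> EdgX Pi E F"
  using arena unfolding arena_def EdgX_def VX_def by fastforce

lemma play_in_VX: "playX Pi E F \<rho> \<Longrightarrow> \<rho> 0 \<in> VX V Pi \<Longrightarrow> \<rho> n \<in> VX V Pi"
  unfolding playX_def by (cases n) (auto intro: edge_target_in_VX)

definition owner :: "'v \<times> 'p set \<Rightarrow> 'p" where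
  "owner u = (THE i. i \<in> Pi \<and> u \<in> VXi V Pi Vp i)"

lemma owner_eq: "i \<in> Pi \<Longrightarrow> u \<in> VXi V Pi Vp i \<Longrightarrow> owner u = i"
  using arena unfolding owner_def arena_def VXi_def by (intro the_equality) blast+

lemma update_eq:
  assumes "i \<in> Pi" and "u \<in> VXi V Pi Vp i"
  shows "update V Pi Vp E F v0 J L n u =
    (if u \<in> Vge V Pi E F v0 J n then
       if i \<in> snd u then 0
       else eSuc (INF u'\<in>{u'. (u, u') \<in> EdgX Pi E F}. Sup (cost (FX i) ` Lambda V Pi Vp E F L u'))
     else L u)"
  using owner_eq[OF assms] unfolding update_def owner_def by (simp add: plus_1_eSuc)

lemma Lambda_lam0: "Lambda V Pi Vp E F (lam0 V Pi Vp) u = {\<rho>. playX Pi E F \<rho> \<and> \<rho> 0 = u}"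
proof -
  have "cost (FX i) (\<lambda>m. \<rho> (n + m)) \<le> lam0 V Pi Vp (\<rho> n)"
    if "i \<in> Pi" and "\<rho> n \<in> VXi V Pi Vp i" for \<rho> n i
  proof (cases "i \<in> snd (\<rho> n)")
    case True
    then show ?thesis by (simp add: cost_eq_0 FX_def split_beta)
  next
    case False
    then have "lam0 V Pi Vp (\<rho> n) = \<infinity>"
      using that owner_eq unfolding lam0_def by metis
    then show ?thesis by simp
  qed
  then show ?thesis unfolding Lambda_def by blast
qed

lemma Lambda_SUP_attained:
  assumes "u \<in> VX V Pi" and "Lambda V Pi Vp E F L u \<noteq> {}"
  shows "\<exists>\<rho>\<in>Lambda V Pi Vp E F L u. cost T \<rho> = (SUP \<rho>'\<in>Lambda V Pi Vp E F L u. cost T \<rho>')"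
proof (rule cost_SUP_attained[OF finite_VX assms(2)])
  show "\<rho> n \<in> VX V Pi" if "\<rho> \<in> Lambda V Pi Vp E F L u" for \<rho> n
    using that assms(1) play_in_VX unfolding Lambda_def by auto
qed (rule Lambda_closed)

end

locale optimal_outcomes = arena_game Pi V Vp E F
  for Pi :: "'p set" and V :: "'v set" and Vp E F +
  fixes outcomes :: "'v \<times> 'p set \<Rightarrow> (nat \<Rightarrow> 'v \<times> 'p set) set"
  assumes outcome_play: "x \<in> VX V Pi \<Longrightarrow> \<rho> \<in> outcomes x \<Longrightarrow> playX Pi E F \<rho> \<and> \<rho> 0 = x"
    and outcome_suffix: "x \<in> VX V Pi \<Longrightarrow> \<rho> \<in> outcomes x \<Longrightarrow> (\<lambda>m. \<rho> (n + m)) \<in> outcomes (\<rho> n)"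
    and outcome_no_profitable_deviation:
      "x \<in> VX V Pi \<Longrightarrow> \<rho> \<in> outcomes x \<Longrightarrow> i \<in> Pi \<Longrightarrow> x \<in> VXi V Pi Vp i \<Longrightarrow> i \<notin> snd x \<Longrightarrow>
       (x, y) \<in> EdgX Pi E F \<Longrightarrow> \<exists>\<pi>\<in>outcomes y. cost (FX i) \<rho> \<le> eSuc (cost (FX i) \<pi>)"
begin

lemma outcome_cost_le_update:
  assumes consistent: "\<And>y. y \<in> VX V Pi \<Longrightarrow> outcomes y \<subseteq> Lambda V Pi Vp E F L y"
    and x: "x \<in> VX V Pi" and "\<rho> \<in> outcomes x" and i: "i \<in> Pi" "x \<in> VXi V Pi Vp i"
  shows "cost (FX i) \<rho> \<le> update V Pi Vp E F v0 J L n x"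
proof -
  consider (outside) "x \<notin> Vge V Pi E F v0 J n" | (reached) "i \<in> snd x"
    | (inside) "x \<in> Vge V Pi E F v0 J n" and "i \<notin> snd x"
    by blast
  then show ?thesis
  proof cases
    case outside
    have "\<rho> \<in> Lambda V Pi Vp E F L x" using consistent x \<open>\<rho> \<in> outcomes x\<close> by blast
    then have "cost (FX i) (\<lambda>m. \<rho> (0 + m)) \<le> L (\<rho> 0)" and "\<rho> 0 = x"
      using i unfolding Lambda_def by blast+
    then show ?thesis using outside update_eq[OF i] by simp
  next
    case reached
    have "\<rho> 0 = x" using outcome_play x \<open>\<rho> \<in> outcomes x\<close> by blast
    then have "cost (FX i) \<rho> = 0" using reached by (intro cost_eq_0) (auto simp: FX_def split_beta)
    then show ?thesis by simp
  next
    case inside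
    define g where "g y = Sup (cost (FX i) ` Lambda V Pi Vp E F L y)" for y
    obtain y0 where "(x, y0) \<in> EdgX Pi E F" using ex_edge x by blast
    then have "(INF y\<in>{y. (x, y) \<in> EdgX Pi E F}. g y) \<in> g ` {y. (x, y) \<in> EdgX Pi E F}"
      by (blast intro: wellorder_InfI)
    then obtain y where y: "(x, y) \<in> EdgX Pi E F" and g_y: "g y = (INF y\<in>{y. (x, y) \<in> EdgX Pi E F}. g y)"
      by auto
    obtain \<pi> where \<pi>: "\<pi> \<in> outcomes y" and le: "cost (FX i) \<rho> \<le> eSuc (cost (FX i) \<pi>)"
      using outcome_no_profitable_deviation[OF x \<open>\<rho> \<in> outcomes x\<close> i \<open>i \<notin> snd x\<close> y] by blast
    have "\<pi> \<in> Lambda V Pi Vp E F L y" using consistent edge_target_in_VX[OF y] \<pi> by blast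
    then have "cost (FX i) \<pi> \<le> g y" unfolding g_def by (rule SUP_upper)
    with le have "cost (FX i) \<rho> \<le> eSuc (g y)" by (meson eSuc_ile_mono order.trans)
    then show ?thesis using inside update_eq[OF i] g_y unfolding g_def by simp
  qed
qed

lemma outcomes_subset_Lambda_update:
  assumes "\<And>y. y \<in> VX V Pi \<Longrightarrow> outcomes y \<subseteq> Lambda V Pi Vp E F L y" and "x \<in> VX V Pi"
  shows "outcomes x \<subseteq> Lambda V Pi Vp E F (update V Pi Vp E F v0 J L n) x"
proof
  fix \<rho> assume "\<rho> \<in> outcomes x"
  with \<open>x \<in> VX V Pi\<close> have play: "playX Pi E F \<rho>" "\<rho> 0 = x" using outcome_play by blast+
  have "cost (FX i) (\<lambda>m. \<rho> (j + m)) \<le> update V Pi Vp E F v0 J L n (\<rho> j)"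
    if "i \<in> Pi" "\<rho> j \<in> VXi V Pi Vp i" for i j
  proof (rule outcome_cost_le_update[OF assms(1) _ _ that])
    show "\<rho> j \<in> VX V Pi" using play play_in_VX \<open>x \<in> VX V Pi\<close> by blast
    show "(\<lambda>m. \<rho> (j + m)) \<in> outcomes (\<rho> j)"
      using outcome_suffix \<open>x \<in> VX V Pi\<close> \<open>\<rho> \<in> outcomes x\<close> by blast
  qed
  then show "\<rho> \<in> Lambda V Pi Vp E F (update V Pi Vp E F v0 J L n) x"
    unfolding Lambda_def using play by blast
qed

lemma outcomes_subset_Lambda_lam:
  "x \<in> VX V Pi \<Longrightarrow> outcomes x \<subseteq> Lambda V Pi Vp E F (lam V Pi Vp E F v0 J k) x"
proof (induction k arbitrary: x)
  case 0
  then show ?case unfolding lam_def labseq.simps fst_conv Lambda_lam0 using outcome_play by blast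
next
  case (Suc k)
  then show ?case
    using outcomes_subset_Lambda_update[of "lam V Pi Vp E F v0 J k"]
    by (simp add: lam_def Let_def split_beta)
qed

end

context arena_game
begin

definition some_succ :: "'v \<times> 'p set \<Rightarrow> 'v \<times> 'p set" where
  "some_succ x = (SOME y. (x, y) \<in> EdgX Pi E F)"

definition best_succ :: "('v \<times> 'p set \<Rightarrow> nat \<Rightarrow> 'v \<times> 'p set) \<Rightarrow> 'v \<times> 'p set \<Rightarrow> 'v \<times> 'p set" where
  "best_succ \<pi> x = (SOME y. (x, y) \<in> EdgX Pi E F \<and>
     (\<forall>y'. (x, y') \<in> EdgX Pi E F \<longrightarrow> cost (FX (owner x)) (\<pi> y) \<le> cost (FX (owner x)) (\<pi> y')))"

primrec horizon_play :: "nat \<Rightarrow> 'v \<times> 'p set \<Rightarrow> nat \<Rightarrow> 'v \<times> 'p set" where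
  "horizon_play 0 x = (\<lambda>n. (some_succ ^^ n) x)"
| "horizon_play (Suc h) x = case_nat x (horizon_play h (best_succ (horizon_play h) x))"

definition limit_outcomes :: "'v \<times> 'p set \<Rightarrow> (nat \<Rightarrow> 'v \<times> 'p set) set" where
  "limit_outcomes x = {\<rho>. \<forall>m. \<exists>h\<ge>m. \<forall>j<m. \<rho> j = horizon_play h x j}"

lemma some_succ_edge: "x \<in> VX V Pi \<Longrightarrow> (x, some_succ x) \<in> EdgX Pi E F"
  unfolding some_succ_def by (rule someI_ex) (rule ex_edge)

lemma best_succ:
  assumes "x \<in> VX V Pi"
  shows best_succ_edge: "(x, best_succ \<pi> x) \<in> EdgX Pi E F"
    and best_succ_le: "(x, y) \<in> EdgX Pi E F \<Longrightarrow>
      cost (FX (owner x)) (\<pi> (best_succ \<pi> x)) \<le> cost (FX (owner x)) (\<pi> y)"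
proof -
  define f where "f y = cost (FX (owner x)) (\<pi> y)" for y
  define Y where "Y = {y. (x, y) \<in> EdgX Pi E F}"
  obtain y0 where "y0 \<in> Y" using ex_edge assms unfolding Y_def by blast
  then have "Inf (f ` Y) \<in> f ` Y" by (blast intro: wellorder_InfI)
  then obtain z where "z \<in> Y" and "f z = Inf (f ` Y)" by auto
  then have "\<exists>z. (x, z) \<in> EdgX Pi E F \<and> (\<forall>y'. (x, y') \<in> EdgX Pi E F \<longrightarrow> f z \<le> f y')"
    unfolding Y_def by (metis INF_lower mem_Collect_eq)
  then have "(x, best_succ \<pi> x) \<in> EdgX Pi E F \<and>
      (\<forall>y'. (x, y') \<in> EdgX Pi E F \<longrightarrow> f (best_succ \<pi> x) \<le> f y')"
    unfolding best_succ_def f_def by (rule someI_ex)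
  then show "(x, best_succ \<pi> x) \<in> EdgX Pi E F"
    and "(x, y) \<in> EdgX Pi E F \<Longrightarrow> cost (FX (owner x)) (\<pi> (best_succ \<pi> x)) \<le> cost (FX (owner x)) (\<pi> y)"
    unfolding f_def by blast+
qed

lemma horizon_play_0 [simp]: "horizon_play h x 0 = x"
  by (cases h) simp_all

lemma horizon_play_play: "x \<in> VX V Pi \<Longrightarrow> playX Pi E F (horizon_play h x)"
proof (induction h arbitrary: x)
  case 0
  have "(some_succ ^^ n) x \<in> VX V Pi" for n
    by (induction n) (auto simp: 0 intro: edge_target_in_VX some_succ_edge)
  then show ?case unfolding playX_def by (simp add: some_succ_edge)
next
  case (Suc h)
  have "(x, best_succ (horizon_play h) x) \<in> EdgX Pi E F" by (rule best_succ_edge[OF Suc.prems])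
  with Suc.IH[OF edge_target_in_VX] show ?case
    unfolding playX_def by (auto split: nat.split)
qed

lemma horizon_play_shift: "horizon_play (n + h) x (n + j) = horizon_play h (horizon_play (n + h) x n) j"
  by (induction n arbitrary: x) simp_all

lemma horizon_play_Suc_cost_le:
  assumes x: "x \<in> VX V Pi" and i: "i \<in> Pi" "x \<in> VXi V Pi Vp i" "i \<notin> snd x"
    and y: "(x, y) \<in> EdgX Pi E F"
  shows "cost (FX i) (horizon_play (Suc h) x) \<le> eSuc (cost (FX i) (horizon_play h y))"
proof -
  have "x \<notin> FX i" using i(3) by (auto simp: FX_def)
  then have "cost (FX i) (horizon_play (Suc h) x)
      = eSuc (cost (FX i) (horizon_play h (best_succ (horizon_play h) x)))"
    by (subst cost_Suc) simp_all
  also have "\<dots> \<le> eSuc (cost (FX i) (horizon_play h y))"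
    using best_succ_le[OF x y] owner_eq[OF i(1,2)] by simp
  finally show ?thesis .
qed

lemma horizon_play_accumulation:
  assumes "x \<in> VX V Pi" and "\<And>m. \<exists>h\<ge>m. Q m h" and "\<And>m h. Q (Suc m) h \<Longrightarrow> Q m h"
  obtains r where "\<And>m. \<exists>h\<ge>m. Q m h \<and> (\<forall>j<m. r j = horizon_play h x j)"
proof -
  define S where "S m = {horizon_play h x | h. h \<ge> m \<and> Q m h}" for m
  have "\<exists>r. \<forall>m. \<exists>\<rho>\<in>S m. \<forall>j<m. \<rho> j = r j"
  proof (rule konig_limit[OF finite_VX])
    show "S m \<noteq> {}" for m using assms(2) unfolding S_def by blast
    show "S (Suc m) \<subseteq> S m" for m using assms(3) unfolding S_def by fastforce
    show "\<rho> n \<in> VX V Pi" if "\<rho> \<in> S m" for m \<rho> n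
    proof -
      obtain h where "\<rho> = horizon_play h x" using \<open>\<rho> \<in> S m\<close> unfolding S_def by blast
      then show ?thesis using play_in_VX[OF horizon_play_play[OF assms(1)]] assms(1) by simp
    qed
  qed
  then obtain r where r: "\<forall>m. \<exists>\<rho>\<in>S m. \<forall>j<m. \<rho> j = r j" by blast
  have "\<exists>h\<ge>m. Q m h \<and> (\<forall>j<m. r j = horizon_play h x j)" for m
    using r[rule_format, of m] unfolding S_def by force
  then show ?thesis using that by blast
qed

lemma limit_outcomes_nonempty:
  assumes "x \<in> VX V Pi"
  shows "limit_outcomes x \<noteq> {}"
proof -
  obtain r where "\<And>m. \<exists>h\<ge>m. True \<and> (\<forall>j<m. r j = horizon_play h x j)"
    by (rule horizon_play_accumulation[OF assms, of "\<lambda>_ _. True"]) auto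
  then have "r \<in> limit_outcomes x" unfolding limit_outcomes_def by simp
  then show ?thesis by blast
qed

lemma limit_outcome_play:
  assumes "x \<in> VX V Pi" and "\<rho> \<in> limit_outcomes x"
  shows "playX Pi E F \<rho> \<and> \<rho> 0 = x"
proof
  show "playX Pi E F \<rho>"
    unfolding playX_def
  proof
    fix n
    obtain h where "\<forall>j<Suc (Suc n). \<rho> j = horizon_play h x j"
      using assms(2) unfolding limit_outcomes_def by blast
    then show "(\<rho> n, \<rho> (Suc n)) \<in> EdgX Pi E F"
      using horizon_play_play[OF assms(1)] unfolding playX_def by simp
  qed
  show "\<rho> 0 = x"
    using assms(2) unfolding limit_outcomes_def by fastforce
qed

lemma limit_outcome_suffix:
  assumes "\<rho> \<in> limit_outcomes x"
  shows "(\<lambda>m. \<rho> (n + m)) \<in> limit_outcomes (\<rho> n)"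
  unfolding limit_outcomes_def
proof (intro CollectI allI)
  fix m
  obtain h where "h \<ge> n + Suc m" and agree: "\<forall>j<n + Suc m. \<rho> j = horizon_play h x j"
    using assms unfolding limit_outcomes_def by blast
  define h' where "h' = h - n"
  have h: "h = n + h'" and "h' \<ge> m" using \<open>h \<ge> n + Suc m\<close> unfolding h'_def by simp_all
  have "\<rho> (n + j) = horizon_play h' (\<rho> n) j" if "j < m" for j
    using agree that horizon_play_shift[of n h' x j] unfolding h by simp
  then show "\<exists>h\<ge>m. \<forall>j<m. \<rho> (n + j) = horizon_play h (\<rho> n) j"
    using \<open>h' \<ge> m\<close> by blast
qed

lemma limit_outcome_no_profitable_deviation:
  assumes x: "x \<in> VX V Pi" and \<rho>: "\<rho> \<in> limit_outcomes x"
    and i: "i \<in> Pi" "x \<in> VXi V Pi Vp i" "i \<notin> snd x" and y: "(x, y) \<in> EdgX Pi E F"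
  shows "\<exists>\<pi>\<in>limit_outcomes y. cost (FX i) \<rho> \<le> eSuc (cost (FX i) \<pi>)"
proof -
  define Q where "Q m h \<longleftrightarrow> (\<forall>j<Suc m. \<rho> j = horizon_play (Suc h) x j)" for m h
  have "\<exists>h\<ge>m. Q m h" for m
  proof -
    obtain h where "h \<ge> Suc m" and "\<forall>j<Suc m. \<rho> j = horizon_play h x j"
      using \<rho> unfolding limit_outcomes_def by blast
    then show ?thesis unfolding Q_def by (metis Suc_le_D Suc_le_mono)
  qed
  moreover have "Q (Suc m) h \<Longrightarrow> Q m h" for m h unfolding Q_def by simp
  ultimately obtain r where r: "\<And>m. \<exists>h\<ge>m. Q m h \<and> (\<forall>j<m. r j = horizon_play h y j)"
    using horizon_play_accumulation[OF edge_target_in_VX[OF y]] by blast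
  then have "r \<in> limit_outcomes y" unfolding limit_outcomes_def by blast
  moreover have "cost (FX i) \<rho> \<le> eSuc (cost (FX i) r)"
  proof (cases "cost (FX i) r")
    case (enat c)
    obtain h where "Q (Suc c) h" and agree: "\<forall>j<Suc c. r j = horizon_play h y j"
      using r by blast
    have "cost (FX i) (horizon_play h y) \<le> enat c"
      using cost_le_enat_if_prefix_eq[of "FX i" r c "horizon_play h y"] enat agree
      by (simp add: less_Suc_eq_le)
    then have "cost (FX i) (horizon_play (Suc h) x) \<le> enat (Suc c)"
      using horizon_play_Suc_cost_le[OF x i y, of h] by (metis eSuc_enat eSuc_ile_mono order.trans)
    then have "cost (FX i) \<rho> \<le> enat (Suc c)"
      using cost_le_enat_if_prefix_eq[of "FX i" "horizon_play (Suc h) x" "Suc c" \<rho>] \<open>Q (Suc c) h\<close>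
      unfolding Q_def by (simp add: less_Suc_eq_le)
    then show ?thesis using enat by (simp add: eSuc_enat)
  qed simp
  ultimately show ?thesis by blast
qed

sublocale optimal_outcomes Pi V Vp E F limit_outcomes
proof
  show "playX Pi E F \<rho> \<and> \<rho> 0 = x" if "x \<in> VX V Pi" and "\<rho> \<in> limit_outcomes x" for x \<rho>
    using that by (rule limit_outcome_play)
  show "(\<lambda>m. \<rho> (n + m)) \<in> limit_outcomes (\<rho> n)" if "\<rho> \<in> limit_outcomes x" for x \<rho> n
    using that by (rule limit_outcome_suffix)
qed (fact limit_outcome_no_profitable_deviation)

end

theorem corollary2p12:
  fixes Pi :: "'p set" and V :: "'v set" and Vp :: "'p \<Rightarrow> 'v set"
    and E :: "('v \<times> 'v) set" and F :: "'p \<Rightarrow> 'v set" and v0 :: 'v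
    and J :: "nat \<Rightarrow> 'p set"
  assumes "arena Pi V Vp E"
    and "\<forall>i\<in>Pi. F i \<subseteq> V"
    and "v0 \<in> V"
    and "valid_order Pi E F v0 J"
  shows "\<forall>k. \<forall>u\<in>VX V Pi. \<forall>i\<in>Pi.
           \<exists>\<rho>\<in>Lambda V Pi Vp E F (lam V Pi Vp E F v0 J k) u.
             cost (FX i) \<rho> = (SUP \<rho>'\<in>Lambda V Pi Vp E F (lam V Pi Vp E F v0 J k) u. cost (FX i) \<rho>')"
proof (intro allI ballI)
  fix k u i
  assume u: "u \<in> VX V Pi"
  interpret arena_game Pi V Vp E F by (rule arena_game.intro) (fact assms(1))
  have "limit_outcomes u \<subseteq> Lambda V Pi Vp E F (lam V Pi Vp E F v0 J k) u"
    by (rule outcomes_subset_Lambda_lam[OF u])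
  with limit_outcomes_nonempty[OF u] have "Lambda V Pi Vp E F (lam V Pi Vp E F v0 J k) u \<noteq> {}"
    by blast
  then show "\<exists>\<rho>\<in>Lambda V Pi Vp E F (lam V Pi Vp E F v0 J k) u.
      cost (FX i) \<rho> = (SUP \<rho>'\<in>Lambda V Pi Vp E F (lam V Pi Vp E F v0 J k) u. cost (FX i) \<rho>')"
    by (rule Lambda_SUP_attained[OF u])
qed

end
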